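(* Let $\mathcal A$ be a weakly amenable Banach algebra and let $I$ be a closed two-sided ideal of $\mathcal A$ with a bounded approximate identity. If either (i) $I$ is Arens regular, or (ii) $\mathcal A$ is Arens regular, then $\mathcal A$ is $I$-weakly amenable, i.e. $H^1(\mathcal A,I^* )=\{0\}$.
   Context: $I^*$ is a Banach $\mathcal A$-bimodule with $\langle x,a\cdot f\rangle=\langle xa,f\rangle$, $\langle x,f\cdot a\rangle=\langle ax,f\rangle$. A derivation $D:\mathcal A\to Z$ is a continuous linear map with $D(ab)=a\cdot D(b)+D(a)\cdot b$; it is inner if $D(a)=a\cdot z-z\cdot a$ for some $z\in Z$; $H^1(\mathcal A,Z)=\{0\}$ means every derivation is inner. $\mathcal A$ is weakly amenable if $H^1(\mathcal A,\mathcal A^* )=\{0\}$. *)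

theory Defs
  imports "HOL-Analysis.Analysis"
begin

text \<open>Banach algebras are modelled by the type class real_normed_algebra + banach
 (real scalars, no unit required).  A closed subspace B of the algebra has dual
 space B*, represented by functions 'a => real which are linear and bounded on B
 and vanish outside B (a canonical representative of each functional on B).\<close>

definition closed_ideal :: "'a::{real_normed_algebra,banach} set \<Rightarrow> bool" where
  "closed_ideal I \<longleftrightarrow> subspace I \<and> closed I \<and> (\<forall>a x. x \<in> I \<longrightarrow> a * x \<in> I \<and> x * a \<in> I)"

definition dual :: "'a::real_normed_vector set \<Rightarrow> ('a \<Rightarrow> real) set" where
  "dual B = {f. (\<forall>x y. x \<in> B \<longrightarrow> y \<in> B \<longrightarrow> f (x + y) = f x + f y)
               \<and> (\<forall>c x. x \<in> B \<longrightarrow> f (c *\<^sub>R x) = c * f x)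
               \<and> (\<exists>K. \<forall>x\<in>B. \<bar>f x\<bar> \<le> K * norm x)
               \<and> (\<forall>x. x \<notin> B \<longrightarrow> f x = 0)}"

definition dnorm :: "'a::real_normed_vector set \<Rightarrow> ('a \<Rightarrow> real) \<Rightarrow> real" where
  "dnorm B f = Sup {\<bar>f x\<bar> | x. x \<in> B \<and> norm x \<le> 1}"

definition bidual :: "'a::real_normed_vector set \<Rightarrow> (('a \<Rightarrow> real) \<Rightarrow> real) set" where
  "bidual B = {m. (\<forall>f g. f \<in> dual B \<longrightarrow> g \<in> dual B \<longrightarrow> m (\<lambda>x. f x + g x) = m f + m g)
               \<and> (\<forall>c f. f \<in> dual B \<longrightarrow> m (\<lambda>x. c * f x) = c * m f)
               \<and> (\<exists>K. \<forall>f\<in>dual B. \<bar>m f\<bar> \<le> K * dnorm B f)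
               \<and> (\<forall>f. f \<notin> dual B \<longrightarrow> m f = 0)}"

text \<open>Module actions on B*: dmod_left B a f is a\<cdot>f with (a\<cdot>f)(x) = f(xa);
  dmod_right B f a is f\<cdot>a with (f\<cdot>a)(x) = f(ax).\<close>
definition dmod_left :: "'a::real_normed_algebra set \<Rightarrow> 'a \<Rightarrow> ('a \<Rightarrow> real) \<Rightarrow> ('a \<Rightarrow> real)" where
  "dmod_left B a f = (\<lambda>x. if x \<in> B then f (x * a) else 0)"

definition dmod_right :: "'a::real_normed_algebra set \<Rightarrow> ('a \<Rightarrow> real) \<Rightarrow> 'a \<Rightarrow> ('a \<Rightarrow> real)" where
  "dmod_right B f a = (\<lambda>x. if x \<in> B then f (a * x) else 0)"

text \<open>First and second Arens products on B**:
  <m \<box> n, f> = <m, n\<cdot>f>, <n\<cdot>f, a> = <n, f\<cdot>a>;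
  <m \<diamond> n, f> = <n, f\<cdot>m>, <f\<cdot>m, a> = <m, a\<cdot>f>.\<close>
definition arens1 :: "'a::real_normed_algebra set \<Rightarrow> (('a \<Rightarrow> real) \<Rightarrow> real) \<Rightarrow> (('a \<Rightarrow> real) \<Rightarrow> real) \<Rightarrow> (('a \<Rightarrow> real) \<Rightarrow> real)" where
  "arens1 B m n = (\<lambda>f. if f \<in> dual B then m (\<lambda>a. if a \<in> B then n (dmod_right B f a) else 0) else 0)"

definition arens2 :: "'a::real_normed_algebra set \<Rightarrow> (('a \<Rightarrow> real) \<Rightarrow> real) \<Rightarrow> (('a \<Rightarrow> real) \<Rightarrow> real) \<Rightarrow> (('a \<Rightarrow> real) \<Rightarrow> real)" where
  "arens2 B m n = (\<lambda>f. if f \<in> dual B then n (\<lambda>a. if a \<in> B then m (dmod_left B a f) else 0) else 0)"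

definition arens_regular :: "'a::real_normed_algebra set \<Rightarrow> bool" where
  "arens_regular B \<longleftrightarrow> (\<forall>m\<in>bidual B. \<forall>n\<in>bidual B. arens1 B m n = arens2 B m n)"

text \<open>Bounded approximate identity for I: a bounded net (e) in I with e x \<rightarrow> x, x e \<rightarrow> x
  for all x in I; the net is represented by its image filter F on the algebra.\<close>
definition has_bai :: "'a::real_normed_algebra set \<Rightarrow> bool" where
  "has_bai I \<longleftrightarrow> (\<exists>F::'a filter. \<exists>K. F \<noteq> bot \<and> (\<forall>\<^sub>F e in F. e \<in> I \<and> norm e \<le> K)
      \<and> (\<forall>x\<in>I. ((\<lambda>e. e * x) \<longlongrightarrow> x) F \<and> ((\<lambda>e. x * e) \<longlongrightarrow> x) F))"

definition derivation_into_dual :: "'a::real_normed_algebra set \<Rightarrow> ('a \<Rightarrow> ('a \<Rightarrow> real)) \<Rightarrow> bool" where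
  "derivation_into_dual B D \<longleftrightarrow> (\<forall>a. D a \<in> dual B)
     \<and> (\<forall>a b. D (a + b) = (\<lambda>x. D a x + D b x))
     \<and> (\<forall>c a. D (c *\<^sub>R a) = (\<lambda>x. c * D a x))
     \<and> (\<exists>K. \<forall>a. dnorm B (D a) \<le> K * norm a)
     \<and> (\<forall>a b. D (a * b) = (\<lambda>x. dmod_left B a (D b) x + dmod_right B (D a) b x))"

definition inner_derivation_into_dual :: "'a::real_normed_algebra set \<Rightarrow> ('a \<Rightarrow> ('a \<Rightarrow> real)) \<Rightarrow> bool" where
  "inner_derivation_into_dual B D \<longleftrightarrow>
     (\<exists>z\<in>dual B. \<forall>a. D a = (\<lambda>x. dmod_left B a z x - dmod_right B z a x))"

definition H1_dual_trivial :: "'a::real_normed_algebra set \<Rightarrow> bool" where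
  "H1_dual_trivial B \<longleftrightarrow> (\<forall>D. derivation_into_dual B D \<longrightarrow> inner_derivation_into_dual B D)"

definition weakly_amenable :: "'a::real_normed_algebra itself \<Rightarrow> bool" where
  "weakly_amenable _ \<longleftrightarrow> H1_dual_trivial (UNIV :: 'a set)"

end

theory Submission
  imports Defs
begin

text \<open>
  Refine the bounded approximate identity (e) to an ultrafilter U, so that every bounded scalar net
  converges along U. Then f \<in> I* extends to f~ \<in> A* by f~(a) = lim f(e a). The weak* limit E of
  (e) and its translate a E lie in the bidual of I (and of A), and their first and second Arens
  products evaluate f to the two iterated limits lim_e lim_e' f(e a e') = lim f(e a) and
  lim_e' lim_e f(e a e') = lim f(a e). So Arens regularity of I, or of A applied to f~, gives
  lim f(e a) = lim f(a e), and this identity is exactly what makes a \<mapsto> (D a)~ a derivation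
  into A* whenever D is a derivation into I*. Weak amenability of A makes it inner, implemented by
  some Z \<in> A*, and the restriction of Z to I implements D.
\<close>

section \<open>Limits along ultrafilters\<close>

definition is_ultrafilter :: "'a filter \<Rightarrow> bool" where
  "is_ultrafilter U \<longleftrightarrow> U \<noteq> bot \<and> (\<forall>P. eventually P U \<or> eventually (\<lambda>x. \<not> P x) U)"

lemma ultrafilter_neq_bot: "is_ultrafilter U \<Longrightarrow> U \<noteq> bot"
  by (simp add: is_ultrafilter_def)

lemma Inf_chain_neq_bot:
  fixes C :: "'a filter set"
  assumes "C \<noteq> {}" and "\<And>F. F \<in> C \<Longrightarrow> F \<noteq> bot"
    and chain: "\<And>F G. F \<in> C \<Longrightarrow> G \<in> C \<Longrightarrow> F \<le> G \<or> G \<le> F"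
  shows "Inf C \<noteq> bot"
proof
  have "eventually P (Inf C) \<longleftrightarrow> (\<exists>F\<in>C. eventually P F)" for P
  proof (rule eventually_Inf_base[OF \<open>C \<noteq> {}\<close>])
    fix F G assume "F \<in> C" "G \<in> C"
    then show "\<exists>H\<in>C. H \<le> inf F G"
      using chain[of F G] by (metis inf.absorb_iff2 inf.orderE order_refl)
  qed
  moreover assume "Inf C = bot"
  ultimately obtain F where "F \<in> C" "eventually (\<lambda>_. False) F" by auto
  with assms(2) show False by (simp add: eventually_False)
qed

lemma exists_ultrafilter_le:
  fixes F :: "'a filter"
  assumes "F \<noteq> bot"
  shows "\<exists>U. is_ultrafilter U \<and> U \<le> F"
proof -
  define A where "A = {G. G \<noteq> bot \<and> G \<le> F}"
  have po: "partial_order_on A (relation_of (\<lambda>G H. H \<le> G) A)"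
    by (rule partial_order_on_relation_ofI) auto
  have "\<exists>G\<in>A. \<forall>H\<in>C. G \<le> H" if "C \<in> Chains (relation_of (\<lambda>G H. H \<le> G) A)" for C
  proof (cases "C = {}")
    case True
    then show ?thesis using assms by (auto simp: A_def)
  next
    case False
    have "C \<subseteq> A" and "\<And>G H. G \<in> C \<Longrightarrow> H \<in> C \<Longrightarrow> G \<le> H \<or> H \<le> G"
      using that unfolding Chains_def relation_of_def by auto
    then have "Inf C \<in> A"
      using False Inf_chain_neq_bot[OF False] Inf_lower2 by (fastforce simp: A_def)
    then show ?thesis by (auto intro: Inf_lower)
  qed
  then obtain U where U: "U \<in> A" and max: "\<And>G. G \<in> A \<Longrightarrow> G \<le> U \<Longrightarrow> G = U"
    using predicate_Zorn[OF po] by blast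
  have "eventually P U \<or> eventually (\<lambda>x. \<not> P x) U" for P
  proof (rule ccontr)
    assume neither: "\<not> (eventually P U \<or> eventually (\<lambda>x. \<not> P x) U)"
    define G where "G = inf U (principal {x. P x})"
    have "G \<noteq> bot"
      using neither by (auto simp: G_def eventually_inf_principal trivial_limit_def)
    moreover have "G \<le> U" by (simp add: G_def)
    moreover have "U \<le> F" using U by (simp add: A_def)
    ultimately have "G = U" using max by (simp add: A_def)
    moreover have "eventually P G" by (simp add: G_def eventually_inf_principal)
    ultimately show False using neither by simp
  qed
  then show ?thesis using U by (auto simp: A_def is_ultrafilter_def)
qed

text \<open>An ultrafilter converges to every point at which it clusters.\<close>
lemma ultrafilter_compact_tendsto:
  assumes U: "is_ultrafilter U" and "compact S" and "eventually (\<lambda>x. h x \<in> S) U"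
  shows "\<exists>L\<in>S. (h \<longlongrightarrow> L) U"
proof -
  have "filtermap h U \<noteq> bot" "eventually (\<lambda>y. y \<in> S) (filtermap h U)"
    using ultrafilter_neq_bot[OF U] assms(3) by (simp_all add: filtermap_bot_iff eventually_filtermap)
  then obtain L where "L \<in> S" and L: "inf (nhds L) (filtermap h U) \<noteq> bot"
    using \<open>compact S\<close> unfolding compact_filter by blast
  have "eventually (\<lambda>x. h x \<in> V) U" if "open V" "L \<in> V" for V
  proof (rule ccontr)
    assume "\<not> eventually (\<lambda>x. h x \<in> V) U"
    then have "eventually (\<lambda>x. h x \<notin> V) U" using U by (auto simp: is_ultrafilter_def)
    moreover have "eventually (\<lambda>y. y \<in> V) (nhds L)" using that by (rule eventually_nhds_in_open)
    ultimately have "eventually (\<lambda>_. False) (inf (nhds L) (filtermap h U))"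
      unfolding eventually_inf eventually_filtermap
      by (intro exI[of _ "\<lambda>y. y \<in> V"] exI[of _ "\<lambda>y. y \<notin> V"]) auto
    with L show False by (simp add: eventually_False)
  qed
  then show ?thesis using \<open>L \<in> S\<close> by (auto intro: topological_tendstoI)
qed

lemma ultrafilter_tendsto_Lim:
  fixes h :: "'a \<Rightarrow> 'b::{heine_borel,real_normed_vector}"
  assumes U: "is_ultrafilter U" and "Bfun h U"
  shows "(h \<longlongrightarrow> Lim U h) U"
proof -
  obtain K where "eventually (\<lambda>x. norm (h x) \<le> K) U" using \<open>Bfun h U\<close> by (rule BfunE)
  then have "eventually (\<lambda>x. h x \<in> cball 0 K) U" by (simp add: dist_norm)
  then obtain L where "(h \<longlongrightarrow> L) U"
    using ultrafilter_compact_tendsto[OF U compact_cball] by blast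
  then show ?thesis using ultrafilter_neq_bot[OF U] by (simp add: tendsto_Lim)
qed

lemma ultrafilter_Lim_add:
  fixes f g :: "'a \<Rightarrow> real"
  assumes U: "is_ultrafilter U" and "Bfun f U" "Bfun g U"
  shows "Lim U (\<lambda>x. f x + g x) = Lim U f + Lim U g"
  using ultrafilter_neq_bot[OF U]
    tendsto_add[OF ultrafilter_tendsto_Lim[OF U assms(2)] ultrafilter_tendsto_Lim[OF U assms(3)]]
  by (rule tendsto_Lim)

lemma ultrafilter_Lim_mult_left:
  fixes f :: "'a \<Rightarrow> real"
  assumes U: "is_ultrafilter U" and "Bfun f U"
  shows "Lim U (\<lambda>x. c * f x) = c * Lim U f"
  using ultrafilter_neq_bot[OF U] tendsto_mult_left[OF ultrafilter_tendsto_Lim[OF U assms(2)]]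
  by (rule tendsto_Lim)

lemma ultrafilter_Lim_abs_le:
  fixes f :: "'a \<Rightarrow> real"
  assumes U: "is_ultrafilter U" and bound: "eventually (\<lambda>x. \<bar>f x\<bar> \<le> c) U"
  shows "\<bar>Lim U f\<bar> \<le> c"
proof -
  have "Bfun f U" using bound by (intro BfunI) simp
  then have "((\<lambda>x. \<bar>f x\<bar>) \<longlongrightarrow> \<bar>Lim U f\<bar>) U"
    by (intro tendsto_rabs ultrafilter_tendsto_Lim[OF U])
  then show ?thesis using bound ultrafilter_neq_bot[OF U] by (rule tendsto_upperbound)
qed

section \<open>Dual spaces of subspaces\<close>

lemma dual_add:
  "f \<in> dual B \<Longrightarrow> x \<in> B \<Longrightarrow> y \<in> B \<Longrightarrow> f (x + y) = f x + f y"
  by (simp add: dual_def)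

lemma dual_scaleR: "f \<in> dual B \<Longrightarrow> x \<in> B \<Longrightarrow> f (c *\<^sub>R x) = c * f x"
  by (simp add: dual_def)

lemma dual_bounded: "f \<in> dual B \<Longrightarrow> \<exists>K. \<forall>x\<in>B. \<bar>f x\<bar> \<le> K * norm x"
  by (simp add: dual_def)

lemma dual_outside: "f \<in> dual B \<Longrightarrow> x \<notin> B \<Longrightarrow> f x = 0"
  by (simp add: dual_def)

lemma dualI:
  assumes "\<And>x y. x \<in> B \<Longrightarrow> y \<in> B \<Longrightarrow> f (x + y) = f x + f y"
    and "\<And>c x. x \<in> B \<Longrightarrow> f (c *\<^sub>R x) = c * f x"
    and "\<And>x. x \<in> B \<Longrightarrow> \<bar>f x\<bar> \<le> K * norm x"
    and "\<And>x. x \<notin> B \<Longrightarrow> f x = 0"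
  shows "f \<in> dual B"
  using assms unfolding dual_def by blast

lemma dual_diff:
  assumes "f \<in> dual B" "subspace B" "x \<in> B" "y \<in> B"
  shows "f (x - y) = f x - f y"
  using dual_add[OF assms(1) assms(3), of "(-1) *\<^sub>R y"] dual_scaleR[OF assms(1) assms(4), of "-1"]
    assms(2,4) by (simp add: subspace_neg)

lemma bdd_above_dual:
  assumes "f \<in> dual B"
  shows "bdd_above {\<bar>f x\<bar> | x. x \<in> B \<and> norm x \<le> 1}"
proof -
  obtain K where K: "\<forall>x\<in>B. \<bar>f x\<bar> \<le> K * norm x" using dual_bounded[OF assms] by blast
  have "\<bar>f x\<bar> \<le> max K 0" if "x \<in> B" "norm x \<le> 1" for x
  proof -
    have "\<bar>f x\<bar> \<le> max K 0 * norm x" using K that by (metis max.cobounded1 mult_right_mono norm_ge_zero order_trans)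
    also have "\<dots> \<le> max K 0" using that by (simp add: mult_left_le)
    finally show ?thesis .
  qed
  then show ?thesis unfolding bdd_above_def by blast
qed

lemma dnorm_nonneg:
  assumes "f \<in> dual B" "subspace B"
  shows "0 \<le> dnorm B f"
proof -
  have "\<bar>f 0\<bar> \<le> dnorm B f" unfolding dnorm_def
    using assms by (intro cSup_upper bdd_above_dual) (auto simp: subspace_0)
  then show ?thesis by simp
qed

lemma dual_abs_le_dnorm:
  assumes "f \<in> dual B" "subspace B" "x \<in> B"
  shows "\<bar>f x\<bar> \<le> dnorm B f * norm x"
proof (cases "x = 0")
  case True
  then show ?thesis using dual_scaleR[OF assms(1) assms(3), of 0] by simp
next
  case False
  define y where "y = (1 / norm x) *\<^sub>R x"
  have "\<bar>f y\<bar> \<le> dnorm B f" unfolding dnorm_def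
    using assms False by (intro cSup_upper bdd_above_dual) (auto simp: y_def subspace_scale)
  moreover have "f y = f x / norm x" using dual_scaleR[OF assms(1) assms(3)] by (simp add: y_def)
  ultimately show ?thesis using False by (simp add: abs_div divide_le_eq mult.commute)
qed

lemma dnorm_le:
  assumes "subspace B" "0 \<le> M" "\<And>x. x \<in> B \<Longrightarrow> \<bar>h x\<bar> \<le> M * norm x"
  shows "dnorm B h \<le> M"
  unfolding dnorm_def
proof (rule cSup_least)
  show "{\<bar>h x\<bar> | x. x \<in> B \<and> norm x \<le> 1} \<noteq> {}" using assms(1) subspace_0 by force
next
  fix r assume "r \<in> {\<bar>h x\<bar> | x. x \<in> B \<and> norm x \<le> 1}"
  then show "r \<le> M" using assms(2,3) by (auto intro: order_trans mult_left_le)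
qed

lemma dual_add_closed:
  assumes f: "f \<in> dual B" and g: "g \<in> dual B"
  shows "(\<lambda>x. f x + g x) \<in> dual B"
proof -
  obtain K1 K2 where K: "\<forall>x\<in>B. \<bar>f x\<bar> \<le> K1 * norm x" "\<forall>x\<in>B. \<bar>g x\<bar> \<le> K2 * norm x"
    using dual_bounded[OF f] dual_bounded[OF g] by blast
  show ?thesis
  proof (rule dualI[where K="K1 + K2"])
    fix x assume "x \<in> B"
    then have "\<bar>f x\<bar> + \<bar>g x\<bar> \<le> (K1 + K2) * norm x" using K by (simp add: distrib_right add_mono)
    then show "\<bar>f x + g x\<bar> \<le> (K1 + K2) * norm x" by (rule order_trans[OF abs_triangle_ineq])
  qed (use f g in \<open>simp_all add: dual_add dual_scaleR dual_outside distrib_left\<close>)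
qed

lemma dual_mult_closed:
  assumes f: "f \<in> dual B"
  shows "(\<lambda>x. c * f x) \<in> dual B"
proof -
  obtain K where K: "\<forall>x\<in>B. \<bar>f x\<bar> \<le> K * norm x" using dual_bounded[OF f] by blast
  show ?thesis
  proof (rule dualI[where K="\<bar>c\<bar> * K"])
    fix x assume "x \<in> B"
    then show "\<bar>c * f x\<bar> \<le> \<bar>c\<bar> * K * norm x"
      using K by (simp add: abs_mult mult.assoc mult_left_mono)
  qed (use f in \<open>simp_all add: dual_add dual_scaleR dual_outside distrib_left\<close>)
qed

lemma dual_restrict_UNIV:
  assumes f: "f \<in> dual UNIV" and B: "subspace B"
  shows "(\<lambda>x. if x \<in> B then f x else 0) \<in> dual B"
proof -
  obtain K where "\<forall>x. \<bar>f x\<bar> \<le> K * norm x" using dual_bounded[OF f] by blast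
  then show ?thesis
  proof (intro dualI[where K=K])
    fix x y assume "x \<in> B" "y \<in> B"
    then show "(if x + y \<in> B then f (x + y) else 0) = (if x \<in> B then f x else 0) + (if y \<in> B then f y else 0)"
      using B dual_add[OF f] by (simp add: subspace_add)
  next
    fix c x assume "x \<in> B"
    then show "(if c *\<^sub>R x \<in> B then f (c *\<^sub>R x) else 0) = c * (if x \<in> B then f x else 0)"
      using B dual_scaleR[OF f] by (simp add: subspace_scale)
  qed simp_all
qed

lemma dual_tendsto:
  assumes f: "f \<in> dual B" "subspace B" and "y \<in> B"
    and h: "eventually (\<lambda>e. h e \<in> B) F" "(h \<longlongrightarrow> y) F"
  shows "((\<lambda>e. f (h e)) \<longlongrightarrow> f y) F"
proof -
  have "((\<lambda>e. f (h e) - f y) \<longlongrightarrow> 0) F"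
  proof (rule Lim_null_comparison)
    show "eventually (\<lambda>e. norm (f (h e) - f y) \<le> dnorm B f * norm (h e - y)) F"
      using h(1) by eventually_elim
        (use f \<open>y \<in> B\<close> in \<open>simp add: dual_diff[symmetric] dual_abs_le_dnorm subspace_diff\<close>)
    show "((\<lambda>e. dnorm B f * norm (h e - y)) \<longlongrightarrow> 0) F"
      using h(2) by (intro tendsto_mult_right_zero tendsto_norm_zero) (simp add: LIM_zero)
  qed
  then show ?thesis by (rule LIM_zero_cancel)
qed

lemma dmod_right_in_dual:
  assumes f: "f \<in> dual B" "subspace B" and c: "\<And>x. x \<in> B \<Longrightarrow> c * x \<in> B"
  shows "dmod_right B f c \<in> dual B"
proof (rule dualI[where K="dnorm B f * norm c"])
  fix x y assume "x \<in> B" "y \<in> B"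
  then show "dmod_right B f c (x + y) = dmod_right B f c x + dmod_right B f c y"
    using c dual_add[OF f(1)] f(2) by (simp add: dmod_right_def distrib_left subspace_add)
next
  fix d x assume "x \<in> B"
  then show "dmod_right B f c (d *\<^sub>R x) = d * dmod_right B f c x"
    using c dual_scaleR[OF f(1)] f(2) by (simp add: dmod_right_def subspace_scale)
next
  fix x assume "x \<in> B"
  have "\<bar>f (c * x)\<bar> \<le> dnorm B f * norm (c * x)" using dual_abs_le_dnorm[OF f c[OF \<open>x \<in> B\<close>]] .
  also have "\<dots> \<le> dnorm B f * (norm c * norm x)"
    by (rule mult_left_mono[OF norm_mult_ineq dnorm_nonneg[OF f]])
  finally show "\<bar>dmod_right B f c x\<bar> \<le> dnorm B f * norm c * norm x"
    using \<open>x \<in> B\<close> by (simp add: dmod_right_def mult.assoc)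
qed (simp add: dmod_right_def)

lemma dmod_left_in_dual:
  assumes f: "f \<in> dual B" "subspace B" and c: "\<And>x. x \<in> B \<Longrightarrow> x * c \<in> B"
  shows "dmod_left B c f \<in> dual B"
proof (rule dualI[where K="dnorm B f * norm c"])
  fix x y assume "x \<in> B" "y \<in> B"
  then show "dmod_left B c f (x + y) = dmod_left B c f x + dmod_left B c f y"
    using c dual_add[OF f(1)] f(2) by (simp add: dmod_left_def distrib_right subspace_add)
next
  fix d x assume "x \<in> B"
  then show "dmod_left B c f (d *\<^sub>R x) = d * dmod_left B c f x"
    using c dual_scaleR[OF f(1)] f(2) by (simp add: dmod_left_def subspace_scale)
next
  fix x assume "x \<in> B"
  have "\<bar>f (x * c)\<bar> \<le> dnorm B f * norm (x * c)" using dual_abs_le_dnorm[OF f c[OF \<open>x \<in> B\<close>]] .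
  also have "\<dots> \<le> dnorm B f * (norm x * norm c)"
    by (rule mult_left_mono[OF norm_mult_ineq dnorm_nonneg[OF f]])
  finally show "\<bar>dmod_left B c f x\<bar> \<le> dnorm B f * norm c * norm x"
    using \<open>x \<in> B\<close> by (simp add: dmod_left_def mult_ac)
qed (simp add: dmod_left_def)

section \<open>Weak* limits and Arens products\<close>

lemma eventually_dual_comp_bound:
  assumes f: "f \<in> dual B" "subspace B" and w: "eventually (\<lambda>e. w e \<in> B \<and> norm (w e) \<le> C) F"
  shows "eventually (\<lambda>e. \<bar>f (w e)\<bar> \<le> dnorm B f * C) F"
  using w
proof eventually_elim
  case (elim e)
  then show ?case
    using dual_abs_le_dnorm[OF f] mult_left_mono[OF _ dnorm_nonneg[OF f]] by (meson order_trans)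
qed

lemma Bfun_dual_comp:
  assumes "f \<in> dual B" "subspace B" and "eventually (\<lambda>e. w e \<in> B \<and> norm (w e) \<le> C) F"
  shows "Bfun (\<lambda>e. f (w e)) F"
  using eventually_dual_comp_bound[OF assms] by (intro BfunI) simp

lemma ultrafilter_Lim_dual_comp_abs_le:
  assumes "is_ultrafilter U" "f \<in> dual B" "subspace B"
    and "eventually (\<lambda>e. w e \<in> B \<and> norm (w e) \<le> C) U"
  shows "\<bar>Lim U (\<lambda>e. f (w e))\<bar> \<le> dnorm B f * C"
  using assms(1) eventually_dual_comp_bound[OF assms(2-)] by (rule ultrafilter_Lim_abs_le)

definition wstar_lim :: "'b filter \<Rightarrow> 'a::real_normed_vector set \<Rightarrow> ('b \<Rightarrow> 'a) \<Rightarrow> ('a \<Rightarrow> real) \<Rightarrow> real"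
  where "wstar_lim U B w = (\<lambda>f. if f \<in> dual B then Lim U (\<lambda>e. f (w e)) else 0)"

lemma wstar_lim_in_bidual:
  assumes U: "is_ultrafilter U" and B: "subspace B"
    and w: "eventually (\<lambda>e. w e \<in> B \<and> norm (w e) \<le> C) U"
  shows "wstar_lim U B w \<in> bidual B"
  unfolding bidual_def
proof (intro CollectI conjI allI impI)
  fix f g assume f: "f \<in> dual B" and g: "g \<in> dual B"
  then show "wstar_lim U B w (\<lambda>x. f x + g x) = wstar_lim U B w f + wstar_lim U B w g"
    using dual_add_closed[OF f g]
    by (simp add: wstar_lim_def ultrafilter_Lim_add[OF U Bfun_dual_comp[OF f B w] Bfun_dual_comp[OF g B w]])
next
  fix c f assume f: "f \<in> dual B"
  then show "wstar_lim U B w (\<lambda>x. c * f x) = c * wstar_lim U B w f"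
    using dual_mult_closed[OF f]
    by (simp add: wstar_lim_def ultrafilter_Lim_mult_left[OF U Bfun_dual_comp[OF f B w]])
next
  have "\<bar>wstar_lim U B w f\<bar> \<le> C * dnorm B f" if "f \<in> dual B" for f
    using ultrafilter_Lim_dual_comp_abs_le[OF U that B w] that by (simp add: wstar_lim_def mult.commute)
  then show "\<exists>K. \<forall>f\<in>dual B. \<bar>wstar_lim U B w f\<bar> \<le> K * dnorm B f" by blast
qed (simp add: wstar_lim_def)

lemma Lim_dual_comp_linear_in_dual:
  assumes U: "is_ultrafilter U" and C: "subspace C" and g: "g \<in> dual B" "subspace B"
    and L: "eventually (\<lambda>e. linear (L e) \<and> (\<forall>c\<in>C. L e c \<in> B \<and> norm (L e c) \<le> M * norm c)) U"
  shows "(\<lambda>c. if c \<in> C then Lim U (\<lambda>e. g (L e c)) else 0) \<in> dual C"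
proof -
  have L_bound: "eventually (\<lambda>e. L e c \<in> B \<and> norm (L e c) \<le> M * norm c) U" if "c \<in> C" for c
    using L by eventually_elim (use that in blast)
  note Bfun = Bfun_dual_comp[OF g L_bound]
  show ?thesis
  proof (rule dualI[where K="dnorm B g * M"])
    fix x y assume x: "x \<in> C" and y: "y \<in> C"
    have "eventually (\<lambda>e. g (L e (x + y)) = g (L e x) + g (L e y)) U"
      using L by eventually_elim (use g x y in \<open>auto simp: linear_add dual_add\<close>)
    then have "Lim U (\<lambda>e. g (L e (x + y))) = Lim U (\<lambda>e. g (L e x) + g (L e y))"
      by (rule Lim_cong[OF _ refl])
    also have "\<dots> = Lim U (\<lambda>e. g (L e x)) + Lim U (\<lambda>e. g (L e y))"
      using Bfun[OF x] Bfun[OF y] by (rule ultrafilter_Lim_add[OF U])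
    finally show "(if x + y \<in> C then Lim U (\<lambda>e. g (L e (x + y))) else 0)
        = (if x \<in> C then Lim U (\<lambda>e. g (L e x)) else 0) + (if y \<in> C then Lim U (\<lambda>e. g (L e y)) else 0)"
      using C x y by (simp add: subspace_add)
  next
    fix r x assume x: "x \<in> C"
    have "eventually (\<lambda>e. g (L e (r *\<^sub>R x)) = r * g (L e x)) U"
      using L by eventually_elim (use g x in \<open>auto simp: linear_scale dual_scaleR\<close>)
    then have "Lim U (\<lambda>e. g (L e (r *\<^sub>R x))) = Lim U (\<lambda>e. r * g (L e x))"
      by (rule Lim_cong[OF _ refl])
    also have "\<dots> = r * Lim U (\<lambda>e. g (L e x))"
      by (rule ultrafilter_Lim_mult_left[OF U Bfun[OF x]])
    finally show "(if r *\<^sub>R x \<in> C then Lim U (\<lambda>e. g (L e (r *\<^sub>R x))) else 0)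
        = r * (if x \<in> C then Lim U (\<lambda>e. g (L e x)) else 0)"
      using C x by (simp add: subspace_scale)
  next
    fix x assume x: "x \<in> C"
    show "\<bar>if x \<in> C then Lim U (\<lambda>e. g (L e x)) else 0\<bar> \<le> dnorm B g * M * norm x"
      using ultrafilter_Lim_dual_comp_abs_le[OF U g L_bound[OF x]] x by (simp add: mult.assoc)
  qed simp
qed

lemma norm_mult_le_of_norm_right_le:
  fixes x y :: "'a::real_normed_algebra"
  shows "norm y \<le> C \<Longrightarrow> norm (x * y) \<le> C * norm x"
  by (metis mult.commute mult_left_mono norm_ge_zero norm_mult_ineq order_trans)

lemma norm_mult_le_of_norm_left_le:
  fixes x y :: "'a::real_normed_algebra"
  shows "norm x \<le> C \<Longrightarrow> norm (x * y) \<le> C * norm y"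
  by (metis mult_right_mono norm_ge_zero norm_mult_ineq order_trans)

lemma arens1_wstar_lim:
  fixes B :: "'a::real_normed_algebra set"
  assumes U: "is_ultrafilter U" and B: "subspace B" and mult: "\<And>x y. x \<in> B \<Longrightarrow> y \<in> B \<Longrightarrow> x * y \<in> B"
    and g: "g \<in> dual B"
    and v: "eventually (\<lambda>e. v e \<in> B \<and> norm (v e) \<le> C) U"
    and w: "eventually (\<lambda>e. w e \<in> B \<and> norm (w e) \<le> C') U"
  shows "arens1 B (wstar_lim U B v) (wstar_lim U B w) g = Lim U (\<lambda>e. Lim U (\<lambda>e'. g (v e * w e')))"
proof -
  define \<phi> where "\<phi> = (\<lambda>c. if c \<in> B then Lim U (\<lambda>e'. g (c * w e')) else 0)"
  have "wstar_lim U B w (dmod_right B g c) = \<phi> c" if "c \<in> B" for c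
  proof -
    have "dmod_right B g c \<in> dual B" using dmod_right_in_dual[OF g B] mult that by blast
    moreover have "eventually (\<lambda>e'. dmod_right B g c (w e') = g (c * w e')) U"
      using w by eventually_elim (simp add: dmod_right_def)
    ultimately show ?thesis using that by (simp add: wstar_lim_def \<phi>_def Lim_cong)
  qed
  then have "arens1 B (wstar_lim U B v) (wstar_lim U B w) g = wstar_lim U B v \<phi>"
    using g by (simp add: arens1_def \<phi>_def cong: if_cong)
  also have "\<phi> \<in> dual B"
    unfolding \<phi>_def
  proof (rule Lim_dual_comp_linear_in_dual[OF U B g B, where M=C'])
    show "eventually (\<lambda>e. linear (\<lambda>c. c * w e) \<and> (\<forall>c\<in>B. c * w e \<in> B \<and> norm (c * w e) \<le> C' * norm c)) U"
      using w by eventually_elim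
        (use mult in \<open>auto simp: bounded_linear.linear[OF bounded_linear_mult_left]
          norm_mult_le_of_norm_right_le\<close>)
  qed
  then have "wstar_lim U B v \<phi> = Lim U (\<lambda>e. \<phi> (v e))" by (simp add: wstar_lim_def)
  also have "\<dots> = Lim U (\<lambda>e. Lim U (\<lambda>e'. g (v e * w e')))"
    using v by (intro Lim_cong[OF _ refl]) (simp add: \<phi>_def eventually_mono)
  finally show ?thesis .
qed

lemma arens2_wstar_lim:
  fixes B :: "'a::real_normed_algebra set"
  assumes U: "is_ultrafilter U" and B: "subspace B" and mult: "\<And>x y. x \<in> B \<Longrightarrow> y \<in> B \<Longrightarrow> x * y \<in> B"
    and g: "g \<in> dual B"
    and v: "eventually (\<lambda>e. v e \<in> B \<and> norm (v e) \<le> C) U"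
    and w: "eventually (\<lambda>e. w e \<in> B \<and> norm (w e) \<le> C') U"
  shows "arens2 B (wstar_lim U B v) (wstar_lim U B w) g = Lim U (\<lambda>e'. Lim U (\<lambda>e. g (v e * w e')))"
proof -
  define \<psi> where "\<psi> = (\<lambda>c. if c \<in> B then Lim U (\<lambda>e. g (v e * c)) else 0)"
  have "wstar_lim U B v (dmod_left B c g) = \<psi> c" if "c \<in> B" for c
  proof -
    have "dmod_left B c g \<in> dual B" using dmod_left_in_dual[OF g B] mult that by blast
    moreover have "eventually (\<lambda>e. dmod_left B c g (v e) = g (v e * c)) U"
      using v by eventually_elim (simp add: dmod_left_def)
    ultimately show ?thesis using that by (simp add: wstar_lim_def \<psi>_def Lim_cong)
  qed
  then have "arens2 B (wstar_lim U B v) (wstar_lim U B w) g = wstar_lim U B w \<psi>"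
    using g by (simp add: arens2_def \<psi>_def cong: if_cong)
  also have "\<psi> \<in> dual B"
    unfolding \<psi>_def
  proof (rule Lim_dual_comp_linear_in_dual[OF U B g B, where M=C])
    show "eventually (\<lambda>e. linear (\<lambda>c. v e * c) \<and> (\<forall>c\<in>B. v e * c \<in> B \<and> norm (v e * c) \<le> C * norm c)) U"
      using v by eventually_elim
        (use mult in \<open>auto simp: bounded_linear.linear[OF bounded_linear_mult_right]
          norm_mult_le_of_norm_left_le\<close>)
  qed
  then have "wstar_lim U B w \<psi> = Lim U (\<lambda>e'. \<psi> (w e'))" by (simp add: wstar_lim_def)
  also have "\<dots> = Lim U (\<lambda>e'. Lim U (\<lambda>e. g (v e * w e')))"
    using w by (intro Lim_cong[OF _ refl]) (simp add: \<psi>_def eventually_mono)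
  finally show ?thesis .
qed

lemma arens_regular_iterated_Lim_commute:
  fixes B :: "'a::real_normed_algebra set"
  assumes "arens_regular B"
    and U: "is_ultrafilter U" and B: "subspace B" and mult: "\<And>x y. x \<in> B \<Longrightarrow> y \<in> B \<Longrightarrow> x * y \<in> B"
    and g: "g \<in> dual B"
    and v: "eventually (\<lambda>e. v e \<in> B \<and> norm (v e) \<le> C) U"
    and w: "eventually (\<lambda>e. w e \<in> B \<and> norm (w e) \<le> C') U"
  shows "Lim U (\<lambda>e. Lim U (\<lambda>e'. g (v e * w e'))) = Lim U (\<lambda>e'. Lim U (\<lambda>e. g (v e * w e')))"
proof -
  have "arens1 B (wstar_lim U B v) (wstar_lim U B w) = arens2 B (wstar_lim U B v) (wstar_lim U B w)"
    using assms(1) wstar_lim_in_bidual[OF U B v] wstar_lim_in_bidual[OF U B w]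
    unfolding arens_regular_def by blast
  then show ?thesis
    using arens1_wstar_lim[OF U B mult g v w] arens2_wstar_lim[OF U B mult g v w] by metis
qed

section \<open>Extending functionals along a bounded approximate identity\<close>

locale ultrafilter_bai =
  fixes I :: "'a::real_normed_algebra set" and U :: "'a filter" and K :: real
  assumes subspace: "subspace I"
    and ideal: "\<And>a x. x \<in> I \<Longrightarrow> a * x \<in> I \<and> x * a \<in> I"
    and ultrafilter: "is_ultrafilter U"
    and bounded: "eventually (\<lambda>e. e \<in> I \<and> norm e \<le> K) U"
    and approx_left: "\<And>x. x \<in> I \<Longrightarrow> ((\<lambda>e. e * x) \<longlongrightarrow> x) U"
    and approx_right: "\<And>x. x \<in> I \<Longrightarrow> ((\<lambda>e. x * e) \<longlongrightarrow> x) U"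
begin

lemma bound_nonneg: "0 \<le> K"
proof -
  obtain e :: 'a where "norm e \<le> K" using eventually_happens'[OF ultrafilter_neq_bot[OF ultrafilter] bounded] by blast
  then show ?thesis using norm_ge_zero order_trans by blast
qed

lemma eventually_mult_left_bounded: "eventually (\<lambda>e. e * x \<in> I \<and> norm (e * x) \<le> K * norm x) U"
  using bounded by eventually_elim (use ideal in \<open>auto simp: norm_mult_le_of_norm_left_le\<close>)

lemma eventually_mult_right_bounded: "eventually (\<lambda>e. x * e \<in> I \<and> norm (x * e) \<le> K * norm x) U"
  using bounded by eventually_elim (use ideal in \<open>auto simp: norm_mult_le_of_norm_right_le\<close>)

lemma Lim_dual_mult_left:
  assumes "g \<in> dual B" "subspace B" "I \<subseteq> B" "y \<in> I"
  shows "Lim U (\<lambda>e. g (e * y)) = g y"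
proof (rule tendsto_Lim[OF ultrafilter_neq_bot[OF ultrafilter] dual_tendsto[OF assms(1,2)]])
  show "eventually (\<lambda>e. e * y \<in> B) U"
    using eventually_mult_left_bounded[of y] assms(3) by (auto elim: eventually_mono)
qed (use assms approx_left in auto)

lemma Lim_dual_mult_right:
  assumes "g \<in> dual B" "subspace B" "I \<subseteq> B" "y \<in> I"
  shows "Lim U (\<lambda>e. g (y * e)) = g y"
proof (rule tendsto_Lim[OF ultrafilter_neq_bot[OF ultrafilter] dual_tendsto[OF assms(1,2)]])
  show "eventually (\<lambda>e. y * e \<in> B) U"
    using eventually_mult_right_bounded[of y] assms(3) by (auto elim: eventually_mono)
qed (use assms approx_right in auto)

lemma Lim_commute_of_arens_regular:
  assumes "arens_regular B" "subspace B" "\<And>x y. x \<in> B \<Longrightarrow> y \<in> B \<Longrightarrow> x * y \<in> B" "I \<subseteq> B"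
    and g: "g \<in> dual B"
  shows "Lim U (\<lambda>e. g (e * a)) = Lim U (\<lambda>e. g (a * e))"
proof -
  have v: "eventually (\<lambda>e. e \<in> B \<and> norm e \<le> K) U"
    using bounded assms(4) by (auto elim: eventually_mono)
  have w: "eventually (\<lambda>e. a * e \<in> B \<and> norm (a * e) \<le> K * norm a) U"
    using eventually_mult_right_bounded[of a] assms(4) by (auto elim: eventually_mono)
  have "eventually (\<lambda>e. g (e * a) = Lim U (\<lambda>e'. g (e * (a * e')))) U"
    using eventually_mult_left_bounded[of a]
    by eventually_elim (simp add: mult.assoc[symmetric] Lim_dual_mult_right[OF g assms(2,4)])
  then have "Lim U (\<lambda>e. g (e * a)) = Lim U (\<lambda>e. Lim U (\<lambda>e'. g (e * (a * e'))))"
    by (rule Lim_cong[OF _ refl])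
  also have "\<dots> = Lim U (\<lambda>e'. Lim U (\<lambda>e. g (e * (a * e'))))"
    by (rule arens_regular_iterated_Lim_commute[OF assms(1) ultrafilter assms(2,3) g v w])
  also have "eventually (\<lambda>e'. Lim U (\<lambda>e. g (e * (a * e'))) = g (a * e')) U"
    using eventually_mult_right_bounded[of a]
    by eventually_elim (use Lim_dual_mult_left[OF g assms(2,4)] in simp)
  then have "Lim U (\<lambda>e'. Lim U (\<lambda>e. g (e * (a * e')))) = Lim U (\<lambda>e'. g (a * e'))"
    by (rule Lim_cong[OF _ refl])
  finally show ?thesis .
qed

definition extension :: "('a \<Rightarrow> real) \<Rightarrow> 'a \<Rightarrow> real" where
  "extension f = (\<lambda>a. Lim U (\<lambda>e. f (e * a)))"

lemma extension_eq: "f \<in> dual I \<Longrightarrow> x \<in> I \<Longrightarrow> extension f x = f x"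
  unfolding extension_def using Lim_dual_mult_left[OF _ subspace] by blast

lemma extension_in_dual:
  assumes f: "f \<in> dual I"
  shows "extension f \<in> dual UNIV"
proof -
  have "eventually (\<lambda>e. linear ((*) e) \<and> (\<forall>c\<in>UNIV. e * c \<in> I \<and> norm (e * c) \<le> K * norm c)) U"
    using bounded by eventually_elim
      (use ideal in \<open>auto simp: bounded_linear.linear[OF bounded_linear_mult_right]
        norm_mult_le_of_norm_left_le\<close>)
  from Lim_dual_comp_linear_in_dual[OF ultrafilter subspace_UNIV f subspace this]
  show ?thesis by (simp add: extension_def)
qed

lemma dnorm_extension_le:
  assumes f: "f \<in> dual I"
  shows "dnorm UNIV (extension f) \<le> dnorm I f * K"
proof (rule dnorm_le)
  show "0 \<le> dnorm I f * K" using dnorm_nonneg[OF f subspace] bound_nonneg by simp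
  fix x :: 'a
  show "\<bar>extension f x\<bar> \<le> dnorm I f * K * norm x"
    using ultrafilter_Lim_dual_comp_abs_le[OF ultrafilter f subspace eventually_mult_left_bounded[of x]]
    by (simp add: extension_def mult.assoc)
qed simp

lemma extension_add:
  assumes "f \<in> dual I" "g \<in> dual I"
  shows "extension (\<lambda>x. f x + g x) = (\<lambda>x. extension f x + extension g x)"
proof
  fix x
  show "extension (\<lambda>x. f x + g x) x = extension f x + extension g x"
    unfolding extension_def
    by (rule ultrafilter_Lim_add[OF ultrafilter Bfun_dual_comp Bfun_dual_comp])
      (use assms subspace eventually_mult_left_bounded in blast)+
qed

lemma extension_mult:
  assumes "f \<in> dual I"
  shows "extension (\<lambda>x. c * f x) = (\<lambda>x. c * extension f x)"
proof
  fix x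
  show "extension (\<lambda>x. c * f x) x = c * extension f x"
    unfolding extension_def
    by (rule ultrafilter_Lim_mult_left[OF ultrafilter Bfun_dual_comp[OF assms subspace]])
      (rule eventually_mult_left_bounded)
qed

lemma extension_dmod_left: "extension (dmod_left I b f) = dmod_left UNIV b (extension f)"
proof
  fix a
  have "eventually (\<lambda>e. dmod_left I b f (e * a) = f (e * (a * b))) U"
    using eventually_mult_left_bounded[of a] by eventually_elim (simp add: dmod_left_def mult.assoc)
  then show "extension (dmod_left I b f) a = dmod_left UNIV b (extension f) a"
    unfolding extension_def dmod_left_def by (simp add: Lim_cong)
qed

lemma Lim_commute:
  assumes "arens_regular I \<or> arens_regular (UNIV :: 'a set)" and f: "f \<in> dual I"
  shows "Lim U (\<lambda>e. f (e * a)) = Lim U (\<lambda>e. f (a * e))"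
  using assms(1)
proof
  assume "arens_regular I"
  then show ?thesis
    using ideal by (intro Lim_commute_of_arens_regular[OF _ subspace _ order_refl f]) auto
next
  assume "arens_regular (UNIV :: 'a set)"
  have "eventually (\<lambda>e. f (e * a) = extension f (e * a)) U"
    using eventually_mult_left_bounded[of a] by eventually_elim (simp add: extension_eq[OF f])
  then have "Lim U (\<lambda>e. f (e * a)) = Lim U (\<lambda>e. extension f (e * a))"
    by (rule Lim_cong[OF _ refl])
  also have "\<dots> = Lim U (\<lambda>e. extension f (a * e))"
    using \<open>arens_regular UNIV\<close>
    by (intro Lim_commute_of_arens_regular[OF _ subspace_UNIV _ _ extension_in_dual[OF f]]) auto
  also have "eventually (\<lambda>e. extension f (a * e) = f (a * e)) U"
    using eventually_mult_right_bounded[of a] by eventually_elim (simp add: extension_eq[OF f])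
  then have "Lim U (\<lambda>e. extension f (a * e)) = Lim U (\<lambda>e. f (a * e))"
    by (rule Lim_cong[OF _ refl])
  finally show ?thesis .
qed

lemma extension_dmod_right:
  assumes regular: "arens_regular I \<or> arens_regular (UNIV :: 'a set)" and f: "f \<in> dual I"
  shows "extension (dmod_right I f b) = dmod_right UNIV (extension f) b"
proof
  fix a
  have fb: "dmod_right I f b \<in> dual I" using dmod_right_in_dual[OF f subspace] ideal by blast
  have "extension (dmod_right I f b) a = Lim U (\<lambda>e. dmod_right I f b (a * e))"
    unfolding extension_def by (rule Lim_commute[OF regular fb])
  also have "\<dots> = Lim U (\<lambda>e. f ((b * a) * e))"
    using eventually_mult_right_bounded[of a]
    by (intro Lim_cong[OF _ refl]) (simp add: eventually_mono dmod_right_def mult.assoc)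
  also have "\<dots> = extension f (b * a)"
    unfolding extension_def by (rule Lim_commute[OF regular f, symmetric])
  finally show "extension (dmod_right I f b) a = dmod_right UNIV (extension f) b a"
    by (simp add: dmod_right_def)
qed

lemma derivation_extension:
  assumes regular: "arens_regular I \<or> arens_regular (UNIV :: 'a set)"
    and D: "derivation_into_dual I D"
  shows "derivation_into_dual UNIV (\<lambda>a. extension (D a))"
proof -
  have D_dual: "\<And>a. D a \<in> dual I"
    and D_add: "\<And>a b. D (a + b) = (\<lambda>x. D a x + D b x)"
    and D_scale: "\<And>c a. D (c *\<^sub>R a) = (\<lambda>x. c * D a x)"
    and D_mult: "\<And>a b. D (a * b) = (\<lambda>x. dmod_left I a (D b) x + dmod_right I (D a) b x)"
    using D unfolding derivation_into_dual_def by auto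
  obtain M where M: "\<And>a. dnorm I (D a) \<le> M * norm a"
    using D unfolding derivation_into_dual_def by blast
  have "dnorm UNIV (extension (D a)) \<le> (M * K) * norm a" for a
  proof -
    have "dnorm UNIV (extension (D a)) \<le> dnorm I (D a) * K" by (rule dnorm_extension_le[OF D_dual])
    also have "\<dots> \<le> M * norm a * K" by (rule mult_right_mono[OF M bound_nonneg])
    finally show ?thesis by (simp add: mult_ac)
  qed
  moreover have "extension (D (a * b))
      = (\<lambda>x. dmod_left UNIV a (extension (D b)) x + dmod_right UNIV (extension (D a)) b x)" for a b
    using ideal
    by (simp add: D_mult extension_add dmod_left_in_dual dmod_right_in_dual D_dual subspace
        extension_dmod_left extension_dmod_right[OF regular])
  ultimately show ?thesis
    unfolding derivation_into_dual_def
    by (auto simp: extension_in_dual D_dual D_add D_scale extension_add extension_mult)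
qed

lemma inner_derivation_of_extension:
  assumes D: "derivation_into_dual I D"
    and inner: "inner_derivation_into_dual UNIV (\<lambda>a. extension (D a))"
  shows "inner_derivation_into_dual I D"
proof -
  have D_dual: "\<And>a. D a \<in> dual I" using D by (simp add: derivation_into_dual_def)
  obtain Z where Z: "Z \<in> dual UNIV"
    and ZD: "\<And>a. extension (D a) = (\<lambda>x. dmod_left UNIV a Z x - dmod_right UNIV Z a x)"
    using inner unfolding inner_derivation_into_dual_def by blast
  define z where "z = (\<lambda>x. if x \<in> I then Z x else 0)"
  have "D a x = dmod_left I a z x - dmod_right I z a x" for a x
  proof (cases "x \<in> I")
    case True
    have "D a x = extension (D a) x" using extension_eq[OF D_dual True] by simp
    then show ?thesis using True ideal by (simp add: ZD z_def dmod_left_def dmod_right_def)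
  next
    case False
    then show ?thesis
      using dual_outside[OF D_dual] by (simp add: dmod_left_def dmod_right_def)
  qed
  moreover have "z \<in> dual I" unfolding z_def by (rule dual_restrict_UNIV[OF Z subspace])
  ultimately show ?thesis unfolding inner_derivation_into_dual_def by blast
qed

end

theorem corollary3p4:
  fixes I :: "'a::{real_normed_algebra,banach} set"
  assumes "weakly_amenable TYPE('a)"
    and "closed_ideal I"
    and "has_bai I"
    and "arens_regular I \<or> arens_regular (UNIV :: 'a set)"
  shows "H1_dual_trivial I"
proof -
  obtain F :: "'a filter" and K where F: "F \<noteq> bot" "eventually (\<lambda>e. e \<in> I \<and> norm e \<le> K) F"
    and approx: "\<forall>x\<in>I. ((\<lambda>e. e * x) \<longlongrightarrow> x) F \<and> ((\<lambda>e. x * e) \<longlongrightarrow> x) F"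
    using assms(3) unfolding has_bai_def by blast
  obtain U where U: "is_ultrafilter U" "U \<le> F"
    using exists_ultrafilter_le[OF F(1)] by blast
  interpret ultrafilter_bai I U K
    using assms(2) U filter_leD[OF U(2) F(2)] approx tendsto_mono[OF U(2)]
    by unfold_locales (auto simp: closed_ideal_def)
  show ?thesis
    unfolding H1_dual_trivial_def
  proof (intro allI impI)
    fix D assume D: "derivation_into_dual I D"
    then have "inner_derivation_into_dual UNIV (\<lambda>a. extension (D a))"
      using assms(1) derivation_extension[OF assms(4)]
      unfolding weakly_amenable_def H1_dual_trivial_def by blast
    with D show "inner_derivation_into_dual I D" by (rule inner_derivation_of_extension)
  qed
qed

end
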